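(* Let $m/n\in(0,1/2]$. Then the set of spans $\Gamma_n^P$ of $\ast$-orbits $P$ of $f_{m/n}$ is totally ordered by inclusion.
   Context: For $n\ge2$, $\Gamma_n\subset D^2$ is an $n$-star: a tree with edges $e_0,\dots,e_{n-1}$ of equal length, each with a valence-1 vertex at its initial point, meeting at their final points at a central vertex $v$ of valence $n$, cyclically ordered by index. For $m/n\in(0,1/2]$ in lowest terms, $f_{m/n}\colon\Gamma_n\to\Gamma_n$ is the tree map with image edge paths $f_{m/n}(e_0)=e_0\bar e_1e_1\bar e_2e_2\cdots\bar e_me_m$ and $f_{m/n}(e_r)=e_{r+_nm}$ for $r\neq0$ (here $\bar e$ is the reverse of $e$ and $+_n$ is addition mod $n$), expanding each edge uniformly away from preimages of vertices. A $\ast$-orbit is a periodic orbit $P$ of $f_{m/n}$ such that: (a) $P\neq\{v\}$; (b) $P\cap e_r\neq\emptyset$ for all $r$; (c) $f_{m/n}(P\cap e_0)\not\subseteq e_m$; (d) if $p_r$ is the point of $P\cap e_r$ closest to the initial point of $e_r$, then $f_{m/n}(p_r)=p_{r+_nm}$ for all $r\neq0$. The span $\Gamma_n^P$ of $P$ is the smallest connected subset of $\Gamma_n$ containing $P$. *)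

theory Defs
  imports "HOL-Analysis.Analysis"
begin

text \<open>Points of the n-star: the central vertex V, or the point E r t on edge e_r
  at parameter t \<in> [0,1) measured from the initial (valence-1) vertex of e_r
  (t = 1 would be the central vertex).\<close>
datatype spt = V | E nat real

definition star :: "nat \<Rightarrow> spt set" where
  "star n = insert V {E r t | r t. r < n \<and> 0 \<le> t \<and> t < 1}"

definition edge :: "nat \<Rightarrow> spt set" where
  "edge r = insert V {E r t | t. 0 \<le> t \<and> t < 1}"

definition mkpt :: "nat \<Rightarrow> real \<Rightarrow> spt" where
  "mkpt r t = (if 1 \<le> t then V else E r t)"

fun emb :: "nat \<Rightarrow> spt \<Rightarrow> complex" where
  "emb n V = 0"
| "emb n (E r t) = complex_of_real (1 - t) * cis (2 * pi * real r / real n)"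

text \<open>The image of the point at parameter s \<in> [0, 2m+1) of the edge path
  e_0 (e_1)^{-1} e_1 (e_2)^{-1} e_2 ... (e_m)^{-1} e_m, each edge traversed at unit speed.\<close>
definition path0 :: "real \<Rightarrow> spt" where
  "path0 s = (let k = nat \<lfloor>s\<rfloor>; u = s - real k in
     if k = 0 then mkpt 0 u
     else if odd k then mkpt ((k + 1) div 2) (1 - u)
     else mkpt (k div 2) u)"

fun fmap :: "nat \<Rightarrow> nat \<Rightarrow> spt \<Rightarrow> spt" where
  "fmap n m V = V"
| "fmap n m (E r t) = (if r = 0 then path0 ((2 * real m + 1) * t)
                      else E ((r + m) mod n) t)"

definition periodic_orbit :: "nat \<Rightarrow> nat \<Rightarrow> spt set \<Rightarrow> bool" where
  "periodic_orbit n m P \<longleftrightarrow>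
     (\<exists>x \<in> star n. \<exists>p > 0. (fmap n m ^^ p) x = x \<and> P = range (\<lambda>k. (fmap n m ^^ k) x))"

fun param :: "spt \<Rightarrow> real" where
  "param V = 1"
| "param (E r t) = t"

definition closest :: "spt set \<Rightarrow> nat \<Rightarrow> spt \<Rightarrow> bool" where
  "closest P r x \<longleftrightarrow> x \<in> P \<inter> edge r \<and> (\<forall>y \<in> P \<inter> edge r. param x \<le> param y)"

definition star_orbit :: "nat \<Rightarrow> nat \<Rightarrow> spt set \<Rightarrow> bool" where
  "star_orbit n m P \<longleftrightarrow>
     periodic_orbit n m P \<and>
     P \<noteq> {V} \<and>
     (\<forall>r < n. P \<inter> edge r \<noteq> {}) \<and>
     \<not> (fmap n m ` (P \<inter> edge 0) \<subseteq> edge m) \<and>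
     (\<forall>r. 0 < r \<and> r < n \<longrightarrow>
        (\<forall>x. closest P r x \<longrightarrow> closest P ((r + m) mod n) (fmap n m x)))"

definition star_span :: "nat \<Rightarrow> spt set \<Rightarrow> spt set" where
  "star_span n P = {x \<in> star n. \<forall>S. S \<subseteq> star n \<and> P \<subseteq> S \<and> connected (emb n ` S) \<longrightarrow> x \<in> S}"

end

theory Submission
  imports Defs
begin

text \<open>By condition (d), the point of a \<open>\<ast>\<close>-orbit \<open>P\<close> closest to the initial point of
  \<open>e\<^sub>r\<close> has the same parameter on \<open>e\<^sub>r\<close> and on \<open>e\<^sub>r\<^sub>+\<^sub>m\<close> whenever \<open>r \<noteq> 0\<close>. As \<open>m\<close> and \<open>n\<close>
  are coprime, \<open>r \<mapsto> r + m\<close> is a single \<open>n\<close>-cycle on the edges, so these parameters all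
  agree with one value \<open>\<beta>\<^sub>P\<close>. Thus \<open>P\<close> lies in the concentric sub-star of points with
  parameter at least \<open>\<beta>\<^sub>P\<close> and contains all of its \<open>n\<close> endpoints; a connected set through
  two endpoints on different edges contains the segments joining them to the centre, so the span
  of \<open>P\<close> is exactly that sub-star. Such sub-stars are totally ordered by inclusion.\<close>

definition edge_dir :: "nat \<Rightarrow> nat \<Rightarrow> complex" where
  "edge_dir n r = cis (2 * pi * real r / real n)"

lemma norm_edge_dir [simp]: "norm (edge_dir n r) = 1"
  by (simp add: edge_dir_def)

lemma edge_dir_nonzero [simp]: "edge_dir n r \<noteq> 0"
  by (simp add: edge_dir_def)

lemma edge_dir_inj:
  assumes "k < n" "r < n" "edge_dir n k = edge_dir n r"
  shows "k = r"
proof -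
  define a b where "a = 2 * pi * real k / real n" and "b = 2 * pi * real r / real n"
  have ab: "0 \<le> a" "a < 2 * pi" "0 \<le> b" "b < 2 * pi"
    using assms by (auto simp: a_def b_def field_simps)
  have "cis (pi - a) = cis (pi - b)"
    using assms(3) by (simp add: edge_dir_def a_def b_def flip: cis_divide)
  then have "Arg (cis (pi - a)) = Arg (cis (pi - b))"
    by simp
  then have "a = b"
    using ab by (simp add: Arg_cis)
  then show ?thesis
    using assms by (simp add: a_def b_def field_simps)
qed

lemma scaleR_edge_dir_eq:
  assumes "k < n" "r < n" "0 \<le> s" "0 \<le> s'" "s *\<^sub>R edge_dir n k = s' *\<^sub>R edge_dir n r"
  shows "s = s' \<and> (s = 0 \<or> k = r)"
proof -
  have "norm (s *\<^sub>R edge_dir n k) = norm (s' *\<^sub>R edge_dir n r)"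
    using assms(5) by simp
  then have "s = s'"
    using assms(3,4) by simp
  then show ?thesis
    using assms edge_dir_inj by auto
qed

lemma emb_E_eq [simp]: "emb n (E r t) = (1 - t) *\<^sub>R edge_dir n r"
  by (simp add: edge_dir_def scaleR_conv_of_real)

declare emb.simps(2) [simp del]

lemma emb_mkpt: "t \<le> 1 \<Longrightarrow> emb n (mkpt r t) = (1 - t) *\<^sub>R edge_dir n r"
  by (auto simp: mkpt_def emb_E_eq)

lemma mkpt_in_star: "r < n \<Longrightarrow> 0 \<le> t \<Longrightarrow> mkpt r t \<in> star n"
  by (auto simp: mkpt_def star_def)

lemma inj_on_emb_star: "inj_on (emb n) (star n)"
proof
  fix x y assume x: "x \<in> star n" and y: "y \<in> star n" and eq: "emb n x = emb n y"
  show "x = y"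
  proof (cases x; cases y)
    fix k s k' s' assume "x = E k s" "y = E k' s'"
    then show ?thesis
      using scaleR_edge_dir_eq[of k n k' "1 - s" "1 - s'"] x y eq
      by (auto simp: star_def emb_E_eq)
  qed (use x y eq in \<open>auto simp: star_def emb_E_eq\<close>)
qed

definition radial_segment :: "nat \<Rightarrow> nat \<Rightarrow> real \<Rightarrow> real \<Rightarrow> complex set" where
  "radial_segment n k a b = (\<lambda>u. u *\<^sub>R edge_dir n k) ` {a..b}"

lemma mem_radial_segment:
  "w \<in> radial_segment n k a b \<longleftrightarrow> (\<exists>u. a \<le> u \<and> u \<le> b \<and> w = u *\<^sub>R edge_dir n k)"
  by (auto simp: radial_segment_def)

lemma closed_radial_segment: "closed (radial_segment n k a b)"
  unfolding radial_segment_def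
  by (intro compact_imp_closed compact_continuous_image continuous_intros) auto

lemma radial_segment_Int_other_edge:
  assumes "k < n" "k' < n" "k \<noteq> k'" "0 \<le> a" "0 \<le> a'"
  shows "radial_segment n k a b \<inter> radial_segment n k' a' b' \<subseteq> {0}"
proof
  fix w assume "w \<in> radial_segment n k a b \<inter> radial_segment n k' a' b'"
  then obtain u u' where "a \<le> u" "a' \<le> u'" "w = u *\<^sub>R edge_dir n k" "w = u' *\<^sub>R edge_dir n k'"
    by (auto simp: mem_radial_segment)
  then show "w \<in> {0}"
    using scaleR_edge_dir_eq[OF assms(1,2), of u u'] assms(3-5) by auto
qed

lemma radial_segment_Int_adjacent:
  "radial_segment n k a b \<inter> radial_segment n k b c \<subseteq> {b *\<^sub>R edge_dir n k}"
  by (auto simp: mem_radial_segment)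

definition pruned_star :: "nat \<Rightarrow> nat \<Rightarrow> real \<Rightarrow> complex set" where
  "pruned_star n r c = (\<Union>k\<in>{..<n} - {r}. radial_segment n k 0 1) \<union> radial_segment n r 0 c"

lemma closed_pruned_star: "closed (pruned_star n r c)"
  unfolding pruned_star_def by (auto intro!: closed_Un closed_UN closed_radial_segment)

lemma emb_star_in_tip_or_pruned_star:
  assumes "y \<in> star n" "0 \<le> c"
  shows "emb n y \<in> radial_segment n r c 1 \<union> pruned_star n r c"
proof (cases y)
  case V
  then show ?thesis
    using assms(2) by (force simp: pruned_star_def mem_radial_segment)
next
  case (E k s)
  with assms(1) have s: "k < n" "0 \<le> s" "s < 1"
    by (auto simp: star_def)
  consider "k \<noteq> r" | "k = r" "c \<le> 1 - s" | "k = r" "1 - s < c"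
    by linarith
  then show ?thesis
  proof cases
    case 1
    then have "emb n y \<in> radial_segment n k 0 1"
      using E s by (auto simp: mem_radial_segment)
    then show ?thesis
      using 1 s by (auto simp: pruned_star_def)
  next
    case 2
    then show ?thesis
      using E s by (auto simp: mem_radial_segment)
  next
    case 3
    then have "emb n y \<in> radial_segment n r 0 c"
      using E s by (auto simp: mem_radial_segment)
    then show ?thesis
      by (simp add: pruned_star_def)
  qed
qed

lemma radial_segment_Int_pruned_star:
  assumes "r < n" "0 \<le> c"
  shows "radial_segment n r c 1 \<inter> pruned_star n r c \<subseteq> {c *\<^sub>R edge_dir n r}"
proof
  fix w assume w: "w \<in> radial_segment n r c 1 \<inter> pruned_star n r c"
  show "w \<in> {c *\<^sub>R edge_dir n r}"
  proof (cases "w \<in> radial_segment n r 0 c")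
    case True
    then show ?thesis
      using w radial_segment_Int_adjacent[of n r 0 c 1] by auto
  next
    case False
    with w obtain k where "k < n" "k \<noteq> r" "w \<in> radial_segment n k 0 1"
      by (auto simp: pruned_star_def)
    then have "w = 0"
      using w radial_segment_Int_other_edge[of r n k c 0] assms by auto
    moreover obtain \<sigma> where "c \<le> \<sigma>" "w = \<sigma> *\<^sub>R edge_dir n r"
      using w by (auto simp: mem_radial_segment)
    ultimately show ?thesis
      using assms(2) by simp
  qed
qed

text \<open>Cutting edge \<open>r\<close> at parameter \<open>t\<close> splits the embedded star into two closed pieces
  meeting only at the cut point, so a connected set meeting both pieces contains that point.\<close>

lemma connected_subset_star_contains_edge_point:
  assumes S: "S \<subseteq> star n" and conn: "connected (emb n ` S)"
    and r: "r < n" "r' < n" "r' \<noteq> r"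
    and in_S: "E r a \<in> S" "E r' b \<in> S" and t: "a \<le> t" "t \<le> 1"
  shows "mkpt r t \<in> S"
proof -
  have a: "0 \<le> a" and "b < 1"
    using S in_S by (auto simp: star_def)
  have tip_a: "emb n (E r a) \<in> radial_segment n r (1 - t) 1"
    using a t by (auto simp: mem_radial_segment)
  have "emb n (E r' b) \<in> radial_segment n r' 0 1"
    using \<open>b < 1\<close> S in_S by (auto simp: mem_radial_segment star_def)
  then have pruned_b: "emb n (E r' b) \<in> pruned_star n r (1 - t)"
    using r by (auto simp: pruned_star_def)
  have "emb n (mkpt r t) \<in> emb n ` S"
  proof (rule ccontr)
    assume cut_point: "emb n (mkpt r t) \<notin> emb n ` S"
    have "radial_segment n r (1 - t) 1 \<inter> pruned_star n r (1 - t) \<inter> emb n ` S = {}"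
    proof (rule equals0I)
      fix z assume "z \<in> radial_segment n r (1 - t) 1 \<inter> pruned_star n r (1 - t) \<inter> emb n ` S"
      then have "z = (1 - t) *\<^sub>R edge_dir n r" "z \<in> emb n ` S"
        using radial_segment_Int_pruned_star[OF r(1), of "1 - t"] t(2) by auto
      then show False
        using cut_point by (simp add: emb_mkpt[OF t(2)])
    qed
    moreover have "emb n ` S \<subseteq> radial_segment n r (1 - t) 1 \<union> pruned_star n r (1 - t)"
      using S t(2) by (intro image_subsetI emb_star_in_tip_or_pruned_star) auto
    ultimately show False
      using conn closed_radial_segment[of n r "1 - t" 1] closed_pruned_star[of n r "1 - t"]
        in_S tip_a pruned_b
      unfolding connected_closed by blast
  qed
  moreover have "mkpt r t \<in> star n"
    using mkpt_in_star[OF r(1)] a t by simp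
  ultimately show ?thesis
    using inj_on_emb_star[of n] S by (auto dest: inj_onD)
qed

lemma path0_in_star:
  assumes "m < n" "0 \<le> s" "s < 2 * real m + 1"
  shows "path0 s \<in> star n"
proof -
  define k where "k = nat \<lfloor>s\<rfloor>"
  define u where "u = s - real k"
  have k: "real k \<le> s" "s < real k + 1"
    using assms(2) unfolding k_def by linarith+
  then have "k \<le> 2 * m" "0 \<le> u" "u < 1"
    using assms(3) unfolding u_def by linarith+
  moreover have "path0 s = (if k = 0 then mkpt 0 u
     else if odd k then mkpt ((k + 1) div 2) (1 - u) else mkpt (k div 2) u)"
    unfolding path0_def k_def u_def Let_def by simp
  ultimately show ?thesis
    using assms(1) by (auto intro!: mkpt_in_star elim: oddE)
qed

lemma fmap_in_star:
  assumes "m < n" "x \<in> star n"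
  shows "fmap n m x \<in> star n"
proof (cases x)
  case (E r t)
  with assms have "r < n" "0 \<le> t" "t < 1"
    by (auto simp: star_def)
  then show ?thesis
    using E assms path0_in_star[of m n "(2 * real m + 1) * t"] by (auto simp: star_def)
qed (simp add: star_def)

lemma funpow_fmap_in_star: "m < n \<Longrightarrow> x \<in> star n \<Longrightarrow> (fmap n m ^^ k) x \<in> star n"
  by (induction k) (auto intro: fmap_in_star)

lemma finite_range_funpow_periodic:
  assumes "(f ^^ p) x = x" "0 < p"
  shows "finite (range (\<lambda>k. (f ^^ k) x))"
proof (rule finite_subset)
  show "range (\<lambda>k. (f ^^ k) x) \<subseteq> (\<lambda>k. (f ^^ k) x) ` {..<p}"
  proof clarify
    fix k
    have "(f ^^ k) x = (f ^^ (k mod p)) x"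
      using funpow_mod_eq[OF assms(1)] by simp
    then show "(f ^^ k) x \<in> (\<lambda>k. (f ^^ k) x) ` {..<p}"
      using assms(2) by auto
  qed
qed simp

lemma periodic_point_eq_fixpoint:
  assumes "(f ^^ p) x = x" "0 < p" "f z = z" "(f ^^ k) x = z"
  shows "x = z"
proof -
  have z_fixed: "(f ^^ j) z = z" for j
    using assms(3) by (induction j) auto
  have "x = (f ^^ (k * p)) x"
    using funpow_mod_eq[OF assms(1), of "k * p"] by simp
  also have "\<dots> = (f ^^ (k * p - k + k)) x"
    using assms(2) by simp
  also have "\<dots> = (f ^^ (k * p - k)) ((f ^^ k) x)"
    by (simp add: funpow_add)
  also have "\<dots> = z"
    using assms(4) z_fixed by simp
  finally show ?thesis .
qed

lemma funpow_fmap_V [simp]: "(fmap n m ^^ k) V = V"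
  by (induction k) auto

lemma periodic_orbit_subset_star: "m < n \<Longrightarrow> periodic_orbit n m P \<Longrightarrow> P \<subseteq> star n"
  unfolding periodic_orbit_def by (auto intro: funpow_fmap_in_star)

lemma finite_periodic_orbit: "periodic_orbit n m P \<Longrightarrow> finite P"
  unfolding periodic_orbit_def by (auto intro: finite_range_funpow_periodic)

lemma V_notin_periodic_orbit:
  assumes "periodic_orbit n m P" "P \<noteq> {V}"
  shows "V \<notin> P"
proof
  assume "V \<in> P"
  obtain x p where x: "0 < p" "(fmap n m ^^ p) x = x" and P: "P = range (\<lambda>k. (fmap n m ^^ k) x)"
    using assms(1) unfolding periodic_orbit_def by blast
  with \<open>V \<in> P\<close> obtain k where "(fmap n m ^^ k) x = V"
    by (metis rangeE)
  then have "x = V"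
    using periodic_point_eq_fixpoint[OF x(2,1)] by simp
  then show False
    using assms(2) P by auto
qed

lemma star_orbitD:
  assumes "m < n" "star_orbit n m P"
  shows "finite P" "V \<notin> P" "P \<subseteq> star n"
proof -
  have "periodic_orbit n m P" "P \<noteq> {V}"
    using assms(2) by (simp_all add: star_orbit_def)
  then show "finite P" "V \<notin> P" "P \<subseteq> star n"
    using assms(1) finite_periodic_orbit V_notin_periodic_orbit periodic_orbit_subset_star
    by simp_all
qed

definition edge_min :: "spt set \<Rightarrow> nat \<Rightarrow> real" where
  "edge_min P r = Min (param ` (P \<inter> edge r))"

lemma closest_edge_min:
  assumes "finite P" "V \<notin> P" "P \<inter> edge r \<noteq> {}"
  shows "closest P r (E r (edge_min P r))"
proof -
  have "edge_min P r \<in> param ` (P \<inter> edge r)"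
    unfolding edge_min_def using assms by (intro Min_in) auto
  then obtain y where y: "y \<in> P \<inter> edge r" "param y = edge_min P r"
    by auto
  then have "y = E r (edge_min P r)"
    using assms(2) by (auto simp: edge_def)
  moreover have "edge_min P r \<le> param z" if "z \<in> P \<inter> edge r" for z
    unfolding edge_min_def using assms(1) that by (intro Min_le) auto
  ultimately show ?thesis
    using y by (auto simp: closest_def)
qed

lemma closest_param_unique: "closest P r x \<Longrightarrow> closest P r y \<Longrightarrow> param x = param y"
  unfolding closest_def by (meson antisym)

lemma star_orbit_edge_min_shift:
  assumes "m < n" "star_orbit n m P" "0 < r" "r < n"
  shows "edge_min P ((r + m) mod n) = edge_min P r"
proof -
  define r' where "r' = (r + m) mod n"
  have P: "finite P" "V \<notin> P" "\<forall>k<n. P \<inter> edge k \<noteq> {}"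
    using star_orbitD[OF assms(1,2)] assms(2) by (auto simp: star_orbit_def)
  have "r' < n"
    using assms(4) unfolding r'_def by simp
  have "closest P r' (fmap n m (E r (edge_min P r)))"
    using assms closest_edge_min[OF P(1,2)] P(3) unfolding star_orbit_def r'_def by blast
  then have "closest P r' (E r' (edge_min P r))"
    using assms(3) unfolding r'_def by simp
  moreover have "closest P r' (E r' (edge_min P r'))"
    using closest_edge_min[OF P(1,2)] P(3) \<open>r' < n\<close> by blast
  ultimately show ?thesis
    unfolding r'_def using closest_param_unique by fastforce
qed

lemma mod_add_invariant_imp_const:
  fixes g :: "nat \<Rightarrow> 'a"
  assumes "0 < m" "coprime m n" "r < n"
    and shift: "\<And>r. 0 < r \<Longrightarrow> r < n \<Longrightarrow> g ((r + m) mod n) = g r"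
  shows "g r = g (m mod n)"
proof -
  have multiple: "g ((Suc k * m) mod n) = g (m mod n)" for k
  proof (induction k)
    case (Suc k)
    have "(Suc (Suc k) * m) mod n = ((Suc k * m) mod n + m) mod n"
      by (metis mod_add_left_eq mult_Suc add.commute)
    then show ?case
      using Suc shift[of "(Suc k * m) mod n"] assms(3) by (cases "(Suc k * m) mod n = 0") auto
  qed simp
  obtain x y where xy: "m * x = n * y + 1"
    using bezout_nat[of m n] assms by auto
  have "Suc (x * r + n - 1) * m = (m * x) * r + n * m"
    using assms(3) by (simp add: algebra_simps)
  also have "\<dots> = n * (y * r + m) + r"
    using xy by (simp add: algebra_simps)
  finally have "(Suc (x * r + n - 1) * m) mod n = r"
    using assms(3) by simp
  then show ?thesis
    using multiple by metis
qed

lemma star_orbit_edge_min_eq: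
  assumes "0 < m" "m < n" "coprime m n" "star_orbit n m P" "r < n"
  shows "edge_min P r = edge_min P 0"
  using mod_add_invariant_imp_const[of m n _ "edge_min P"] star_orbit_edge_min_shift[OF assms(2,4)] assms
  by (metis gr_zeroI not_less_zero)

definition inner_star :: "nat \<Rightarrow> real \<Rightarrow> spt set" where
  "inner_star n \<beta> = insert V {E r \<tau> | r \<tau>. r < n \<and> \<beta> \<le> \<tau> \<and> 0 \<le> \<tau> \<and> \<tau> < 1}"

lemma inner_star_subset_star: "inner_star n \<beta> \<subseteq> star n"
  by (auto simp: inner_star_def star_def)

lemma inner_star_antimono: "\<alpha> \<le> \<beta> \<Longrightarrow> inner_star n \<beta> \<subseteq> inner_star n \<alpha>"
  by (auto simp: inner_star_def)

lemma mkpt_in_inner_star: "r < n \<Longrightarrow> \<beta> \<le> t \<Longrightarrow> 0 \<le> t \<Longrightarrow> mkpt r t \<in> inner_star n \<beta>"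
  by (auto simp: mkpt_def inner_star_def)

lemma scaleR_emb_in_emb_inner_star:
  assumes "y \<in> inner_star n \<beta>" "0 \<le> u" "u \<le> 1"
  shows "u *\<^sub>R emb n y \<in> emb n ` inner_star n \<beta>"
proof (cases y)
  case V
  then show ?thesis
    using assms(1) by (metis emb.simps(1) image_eqI scaleR_zero_right)
next
  case (E r \<tau>)
  with assms(1) have \<tau>: "r < n" "\<beta> \<le> \<tau>" "0 \<le> \<tau>" "\<tau> < 1"
    by (auto simp: inner_star_def)
  define t where "t = 1 - u * (1 - \<tau>)"
  have "u * (1 - \<tau>) \<le> 1 - \<tau>"
    using assms(2,3) \<tau> by (simp add: mult_left_le_one_le)
  then have "\<tau> \<le> t"
    unfolding t_def by linarith
  have "t \<le> 1"
    using assms(2) \<tau> unfolding t_def by simp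
  have "mkpt r t \<in> inner_star n \<beta>"
    using \<tau> \<open>\<tau> \<le> t\<close> by (intro mkpt_in_inner_star) auto
  moreover have "emb n (mkpt r t) = u *\<^sub>R emb n y"
    using \<open>t \<le> 1\<close> E by (simp add: emb_mkpt t_def)
  ultimately show ?thesis
    by (metis image_eqI)
qed

lemma connected_emb_inner_star: "connected (emb n ` inner_star n \<beta>)"
proof (rule starlike_imp_connected)
  have "0 \<in> emb n ` inner_star n \<beta>"
    by (force simp: inner_star_def)
  moreover have "closed_segment 0 x \<subseteq> emb n ` inner_star n \<beta>"
    if "x \<in> emb n ` inner_star n \<beta>" for x
    using that by (auto simp: in_segment intro!: scaleR_emb_in_emb_inner_star)
  ultimately show "starlike (emb n ` inner_star n \<beta>)"
    unfolding starlike_def by blast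
qed

lemma star_span_subset:
  assumes "P \<subseteq> T" "T \<subseteq> star n" "connected (emb n ` T)"
  shows "star_span n P \<subseteq> T"
  using assms unfolding star_span_def by blast

lemma inner_star_subset_star_span:
  assumes "2 \<le> n" "P \<subseteq> star n" "\<forall>r<n. E r \<beta> \<in> P"
  shows "inner_star n \<beta> \<subseteq> star_span n P"
proof
  fix x assume x: "x \<in> inner_star n \<beta>"
  have "E 0 \<beta> \<in> P"
    using assms(1,3) by simp
  then have \<beta>: "\<beta> \<le> 1"
    using assms(2) by (auto simp: star_def)
  obtain r t where rt: "r < n" "\<beta> \<le> t" "t \<le> 1" "x = mkpt r t"
  proof (cases x)
    case V
    then show ?thesis
      using that[of 0 1] assms(1) \<beta> by (simp add: mkpt_def)
  next
    case (E r t)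
    then show ?thesis
      using that[of r t] x by (auto simp: inner_star_def mkpt_def)
  qed
  have "\<exists>r'<n. r' \<noteq> r"
    using assms(1) by (intro exI[of _ "if r = 0 then 1 else 0"]) auto
  then obtain r' where "r' < n" "r' \<noteq> r"
    by blast
  then have "x \<in> S" if "S \<subseteq> star n" "P \<subseteq> S" "connected (emb n ` S)" for S
    using connected_subset_star_contains_edge_point[of S n r r' \<beta> \<beta> t] that rt assms(3) by auto
  then show "x \<in> star_span n P"
    using x inner_star_subset_star unfolding star_span_def by blast
qed

lemma subset_inner_star_if_closest:
  assumes "P \<subseteq> star n" "V \<notin> P" "\<forall>r<n. closest P r (E r \<beta>)"
  shows "P \<subseteq> inner_star n \<beta>"
proof
  fix y assume "y \<in> P"
  with assms(1,2) obtain r \<tau> where y: "y = E r \<tau>" "r < n" "0 \<le> \<tau>" "\<tau> < 1"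
    by (cases y) (auto simp: star_def)
  with \<open>y \<in> P\<close> have "y \<in> P \<inter> edge r"
    by (auto simp: edge_def)
  then have "\<beta> \<le> param y"
    using assms(3) y(2) unfolding closest_def by simp
  with y show "y \<in> inner_star n \<beta>"
    by (auto simp: inner_star_def)
qed

lemma star_span_eq_inner_star:
  assumes "2 \<le> n" "P \<subseteq> star n" "V \<notin> P" "\<forall>r<n. closest P r (E r \<beta>)"
  shows "star_span n P = inner_star n \<beta>"
proof (rule antisym)
  show "star_span n P \<subseteq> inner_star n \<beta>"
    using subset_inner_star_if_closest[OF assms(2-4)]
    by (rule star_span_subset[OF _ inner_star_subset_star connected_emb_inner_star])
  show "inner_star n \<beta> \<subseteq> star_span n P"
    using assms(4) by (intro inner_star_subset_star_span[OF assms(1,2)]) (simp add: closest_def)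
qed

lemma star_orbit_closest_edge_min_0:
  assumes "0 < m" "m < n" "coprime m n" "star_orbit n m P" "r < n"
  shows "closest P r (E r (edge_min P 0))"
proof -
  have "P \<inter> edge r \<noteq> {}"
    using assms(4,5) by (simp add: star_orbit_def)
  then have "closest P r (E r (edge_min P r))"
    by (rule closest_edge_min[OF star_orbitD(1,2)[OF assms(2,4)]])
  then show ?thesis
    using star_orbit_edge_min_eq[OF assms] by simp
qed

theorem lemma2p2:
  fixes m n :: nat
  assumes "0 < m" and "2 * m \<le> n" and "coprime m n"
  assumes "star_orbit n m P" and "star_orbit n m Q"
  shows "star_span n P \<subseteq> star_span n Q \<or> star_span n Q \<subseteq> star_span n P"
proof -
  have "2 \<le> n" "m < n"
    using assms(1,2) by simp_all
  then have span: "star_span n R = inner_star n (edge_min R 0)" if "star_orbit n m R" for R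
    using star_span_eq_inner_star star_orbitD[OF _ that]
      star_orbit_closest_edge_min_0[OF assms(1) _ assms(3) that]
    by simp
  show ?thesis
    unfolding span[OF assms(4)] span[OF assms(5)] using inner_star_antimono by (metis nle_le)
qed

end
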